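(* Let $(L,\wedge,\vee,0,1)$ be a bounded lattice. Then its multiplicative Nakano mosaic $(L,\boxdot,1)$, where $x\boxdot y:=\{z\in L\mid x\wedge y=x\wedge z=z\wedge y\}$, is an L-mosaic (with neutral element $1$ playing the role of $0$ in the definition).
   Context: For a multioperation $\boxdot:A\times A\to\wp(A)$ and subsets $X,Y$, $X\boxdot Y:=\bigcup_{x\in X,y\in Y}x\boxdot y$. A commutative mosaic $(A,\boxdot,e)$: $x\boxdot y=y\boxdot x$, $e\boxdot x=\{x\}$ for all $x$, and for some endofunction $\rho$, $z\in x\boxdot y$ implies $x\in z\boxdot\rho(y)$ and $y\in\rho(x)\boxdot z$. An L-mosaic is a commutative mosaic $(A,\boxdot,e)$ such that: (Lms1) $e,x\in x\boxdot x$ for all $x$; (Lms2) $(x\boxdot x)\boxdot(x\boxdot x)=x\boxdot x$; (Lms3) $(x\boxdot(x\boxdot y))\cap((x\boxdot y)\boxdot y)\subseteq x\boxdot y$; (Lms4) for all $x,y$ there is a unique $z\in x\boxdot y$ with $x,y\in z\boxdot z$. *)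

theory Defs
  imports Main
begin

text \<open>A multioperation on the carrier type 'a is a function 'a => 'a => 'a set.
  The carrier of the mosaic is the whole type UNIV.\<close>

definition set_mult :: "('a \<Rightarrow> 'a \<Rightarrow> 'a set) \<Rightarrow> 'a set \<Rightarrow> 'a set \<Rightarrow> 'a set" where
  "set_mult M X Y = (\<Union>x\<in>X. \<Union>y\<in>Y. M x y)"

definition comm_mosaic :: "('a \<Rightarrow> 'a \<Rightarrow> 'a set) \<Rightarrow> 'a \<Rightarrow> bool" where
  "comm_mosaic M e \<longleftrightarrow>
     (\<forall>x y. M x y = M y x) \<and>
     (\<forall>x. M e x = {x}) \<and>
     (\<exists>\<rho> :: 'a \<Rightarrow> 'a. \<forall>x y z. z \<in> M x y \<longrightarrow> x \<in> M z (\<rho> y) \<and> y \<in> M (\<rho> x) z)"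

definition L_mosaic :: "('a \<Rightarrow> 'a \<Rightarrow> 'a set) \<Rightarrow> 'a \<Rightarrow> bool" where
  "L_mosaic M e \<longleftrightarrow>
     comm_mosaic M e \<and>
     (\<forall>x. e \<in> M x x \<and> x \<in> M x x) \<and>
     (\<forall>x. set_mult M (M x x) (M x x) = M x x) \<and>
     (\<forall>x y. set_mult M {x} (M x y) \<inter> set_mult M (M x y) {y} \<subseteq> M x y) \<and>
     (\<forall>x y. \<exists>!z. z \<in> M x y \<and> x \<in> M z z \<and> y \<in> M z z)"

definition nakano_mult :: "'a::bounded_lattice \<Rightarrow> 'a \<Rightarrow> 'a set" where
  "nakano_mult x y = {z. inf x y = inf x z \<and> inf x z = inf z y}"

end

theory Submission
  imports Defs
begin

text \<open>Every axiom reduces to a statement about meets: \<open>z \<in> x \<boxdot> y\<close> says that \<open>x \<sqinter> y\<close>,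
  \<open>x \<sqinter> z\<close> and \<open>z \<sqinter> y\<close> coincide, a condition symmetric in \<open>x, y, z\<close>, so the mosaic is
  commutative with \<open>\<rho> = id\<close>; \<open>x \<boxdot> x\<close> is the principal filter of \<open>x\<close>; and the element
  required by (Lms4) is \<open>x \<sqinter> y\<close>.\<close>

lemma mem_nakano_mult_iff:
  "z \<in> nakano_mult x y \<longleftrightarrow> inf x y = inf x z \<and> inf x z = inf z y"
  by (simp add: nakano_mult_def)

lemma nakano_mult_commute: "nakano_mult x y = nakano_mult y x"
  by (auto simp: mem_nakano_mult_iff inf_commute)

lemma nakano_mult_top: "nakano_mult top x = {x}"
  by (auto simp: mem_nakano_mult_iff inf_commute)

lemma nakano_mult_reversible:
  assumes "z \<in> nakano_mult x y"
  shows "x \<in> nakano_mult z y" and "y \<in> nakano_mult x z"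
  using assms by (auto simp: mem_nakano_mult_iff inf_commute)

lemma comm_mosaic_nakano_mult: "comm_mosaic nakano_mult top"
  unfolding comm_mosaic_def
proof (intro conjI allI exI[of _ id] impI)
  show "nakano_mult x y = nakano_mult y x" for x y :: 'a
    by (rule nakano_mult_commute)
  show "nakano_mult top x = {x}" for x :: 'a
    by (rule nakano_mult_top)
  fix x y z :: 'a
  assume "z \<in> nakano_mult x y"
  from nakano_mult_reversible[OF this]
  show "x \<in> nakano_mult z (id y)" and "y \<in> nakano_mult (id x) z"
    by simp_all
qed

lemma nakano_mult_self: "nakano_mult x x = {z. x \<le> z}"
  by (auto simp: mem_nakano_mult_iff inf.absorb_iff1 inf_commute)

lemma set_mult_nakano_mult_self:
  "set_mult nakano_mult (nakano_mult x x) (nakano_mult x x) = nakano_mult x x"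
proof
  show "set_mult nakano_mult (nakano_mult x x) (nakano_mult x x) \<subseteq> nakano_mult x x"
  proof
    fix z assume "z \<in> set_mult nakano_mult (nakano_mult x x) (nakano_mult x x)"
    then obtain a b where "x \<le> a" "x \<le> b" "z \<in> nakano_mult a b"
      by (auto simp: set_mult_def nakano_mult_self)
    then have "x \<le> inf z b"
      by (metis mem_nakano_mult_iff le_inf_iff)
    then show "z \<in> nakano_mult x x"
      by (simp add: nakano_mult_self)
  qed
next
  have "z \<in> nakano_mult z z" for z :: 'a
    by (simp add: nakano_mult_self)
  then show "nakano_mult x x \<subseteq> set_mult nakano_mult (nakano_mult x x) (nakano_mult x x)"
    unfolding set_mult_def by blast
qed

lemma nakano_mult_Lms3:
  "set_mult nakano_mult {x} (nakano_mult x y) \<inter> set_mult nakano_mult (nakano_mult x y) {y}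
     \<subseteq> nakano_mult x y"
proof
  fix w assume "w \<in> set_mult nakano_mult {x} (nakano_mult x y) \<inter>
                      set_mult nakano_mult (nakano_mult x y) {y}"
  then obtain u v where "u \<in> nakano_mult x y" "w \<in> nakano_mult x u"
      and "v \<in> nakano_mult x y" "w \<in> nakano_mult v y"
    by (auto simp: set_mult_def)
  then show "w \<in> nakano_mult x y"
    by (simp add: mem_nakano_mult_iff)
qed

lemma nakano_mult_Lms4:
  "\<exists>!z. z \<in> nakano_mult x y \<and> x \<in> nakano_mult z z \<and> y \<in> nakano_mult z z"
proof (rule ex1I[of _ "inf x y"])
  show "inf x y \<in> nakano_mult x y \<and> x \<in> nakano_mult (inf x y) (inf x y)
          \<and> y \<in> nakano_mult (inf x y) (inf x y)"
    by (simp add: mem_nakano_mult_iff nakano_mult_self inf_assoc inf_left_commute)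
next
  fix z assume "z \<in> nakano_mult x y \<and> x \<in> nakano_mult z z \<and> y \<in> nakano_mult z z"
  then have "inf x y = inf x z" and "z \<le> x"
    by (auto simp: mem_nakano_mult_iff nakano_mult_self)
  then show "z = inf x y"
    by (simp add: inf.absorb2)
qed

theorem mainTheorem9:
  shows "L_mosaic (nakano_mult :: 'a::bounded_lattice \<Rightarrow> 'a \<Rightarrow> 'a set) top"
  unfolding L_mosaic_def
  by (intro conjI allI comm_mosaic_nakano_mult set_mult_nakano_mult_self
      nakano_mult_Lms3 nakano_mult_Lms4) (simp_all add: nakano_mult_self)

end
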